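(* Let $\Omega\subset\mathbb{R}^{n+1}$ be a compact convex body with $C^1$ boundary, let $\Theta\in[0,1)$, and let $r>0$ satisfy $\omega_\Omega(r)<\sqrt{2-2\Theta}$. Then for every $X_0\in\partial\Omega$, $$B^{n+1}_r(X_0)\cap\partial\Omega\subset\partial\Omega^+_\Theta(X_0),$$ and $$\{X\in\mathbb{R}^{n+1}\mid \langle X-X_0,-\mathcal{N}_\Omega(X_0)\rangle\ge\sqrt{1-\Theta^2}\,|X-X_0|\}\cap B^{n+1}_r(X_0)\subset\Omega.$$
   Context: $\mathcal{N}_\Omega(X)$ denotes the (unique) outward unit normal to $\Omega$ at $X\in\partial\Omega$. $\omega_\Omega(r):=\sup\{|\mathcal{N}_\Omega(X_1)-\mathcal{N}_\Omega(X_2)|: X_1,X_2\in\partial\Omega,\ |X_1-X_2|<r\}$. For $\Theta\ge0$ and $X_0\in\partial\Omega$, $\partial\Omega^+_\Theta(X_0):=\{X\in\partial\Omega\mid\langle\mathcal{N}_\Omega(X),\mathcal{N}_\Omega(X_0)\rangle>\Theta\}$. $B^{n+1}_r(X)$ is the open Euclidean ball. *)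

theory Defs
  imports "HOL-Analysis.Analysis"
begin

definition convex_body :: "'a::euclidean_space set \<Rightarrow> bool" where
  "convex_body \<Omega> \<longleftrightarrow> compact \<Omega> \<and> convex \<Omega> \<and> interior \<Omega> \<noteq> {}"

definition C1_boundary :: "'a::euclidean_space set \<Rightarrow> bool" where
  "C1_boundary \<Omega> \<longleftrightarrow>
     (\<forall>p\<in>frontier \<Omega>. \<exists>U g G. open U \<and> p \<in> U \<and>
        (\<forall>x\<in>U. (g has_derivative (\<lambda>h. G x \<bullet> h)) (at x)) \<and>
        continuous_on U G \<and> G p \<noteq> 0 \<and>
        \<Omega> \<inter> U = {x\<in>U. g x \<le> (0::real)})"

text \<open>Outward unit normal at a boundary point X: the (unique, for C^1 convex
  bodies) unit vector whose supporting half-space contains the body.\<close>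
definition outer_normal :: "'a::euclidean_space set \<Rightarrow> 'a \<Rightarrow> 'a" where
  "outer_normal \<Omega> X = (THE \<nu>. norm \<nu> = 1 \<and> (\<forall>Y\<in>\<Omega>. (Y - X) \<bullet> \<nu> \<le> 0))"

definition normal_modulus :: "'a::euclidean_space set \<Rightarrow> real \<Rightarrow> real" where
  "normal_modulus \<Omega> r = Sup {norm (outer_normal \<Omega> X1 - outer_normal \<Omega> X2) | X1 X2.
       X1 \<in> frontier \<Omega> \<and> X2 \<in> frontier \<Omega> \<and> dist X1 X2 < r}"

definition boundary_plus :: "'a::euclidean_space set \<Rightarrow> real \<Rightarrow> 'a \<Rightarrow> 'a set" where
  "boundary_plus \<Omega> \<Theta> X0 = {X\<in>frontier \<Omega>. outer_normal \<Omega> X \<bullet> outer_normal \<Omega> X0 > \<Theta>}"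

end

theory Submission
  imports Defs
begin

(*
  Near a boundary point p write \<Omega> as a sublevel set {g \<le> 0} with \<nabla>g(p) \<noteq> 0. Then g(p) = 0,
  convexity makes \<nu> = \<nabla>g(p) / |\<nabla>g(p)| a supporting unit normal, and every direction e with
  e \<bullet> \<nu> < 0 enters \<Omega>; the latter forces \<nu> to be the only supporting unit normal, so \<nu> is
  the outer normal N(p).

  The first inclusion is |N(X) - N(X0)|^2 = 2 - 2 N(X) \<bullet> N(X0) < 2 - 2\<Theta>. For the second,
  suppose a cone point X in B_r(X0) lies outside \<Omega>. The ray from X0 towards X enters \<Omega>, so it
  meets the boundary at some Y = X0 + t (X - X0) in B_r(X0) with t > 0. The supporting half-space
  at Y contains X0, so X - X0 makes an angle of at most \<pi>/2 with N(Y), while it makes an angle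
  of at most arcsin \<Theta> with -N(X0). Hence N(Y) \<bullet> N(X0) \<le> \<Theta>, contradicting the first
  inclusion.
*)

lemma norm_diff_unit_vectors_sq:
  fixes \<mu> \<nu> :: "'a::real_inner"
  assumes "norm \<mu> = 1" "norm \<nu> = 1"
  shows "(norm (\<mu> - \<nu>))\<^sup>2 = 2 - 2 * (\<mu> \<bullet> \<nu>)"
  using assms
  by (simp add: power2_norm_eq_inner inner_diff_left inner_diff_right inner_commute norm_eq_1)

lemma norm_diff_projection_sq:
  fixes x u :: "'a::real_inner"
  assumes "u \<bullet> u = 1"
  shows "(norm (x - (x \<bullet> u) *\<^sub>R u))\<^sup>2 = (norm x)\<^sup>2 - (x \<bullet> u)\<^sup>2"
  unfolding power2_norm_eq_inner using assms
  by (simp add: inner_diff_left inner_diff_right inner_commute power2_eq_square)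

lemma inner_le_if_opposite_cone:
  fixes e M N :: "'a::real_inner"
  assumes "norm M \<le> 1" "norm N \<le> 1" "e \<noteq> 0" "0 \<le> e \<bullet> M"
    and "e \<bullet> N \<le> - sqrt (1 - \<Theta>\<^sup>2) * norm e" "0 \<le> \<Theta>" "\<Theta> \<le> 1"
  shows "M \<bullet> N \<le> \<Theta>"
proof -
  (* Split M and N along u = e / |e| and orthogonally to it: the parallel parts have product
     at most 0, and the orthogonal part of N has length at most \<Theta>. *)
  define u where "u = e /\<^sub>R norm e"
  define M' where "M' = M - (M \<bullet> u) *\<^sub>R u"
  define N' where "N' = N - (N \<bullet> u) *\<^sub>R u"
  have u: "u \<bullet> u = 1"
    using \<open>e \<noteq> 0\<close> norm_eq_1[of u] by (simp add: u_def)
  have s: "0 \<le> sqrt (1 - \<Theta>\<^sup>2)" "(sqrt (1 - \<Theta>\<^sup>2))\<^sup>2 = 1 - \<Theta>\<^sup>2"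
    using assms(6,7) by (simp_all add: power_le_one)
  have Mu: "0 \<le> M \<bullet> u"
    using assms(4) by (simp add: u_def inner_commute)
  have Nu: "N \<bullet> u \<le> - sqrt (1 - \<Theta>\<^sup>2)"
    using assms(3,5) by (simp add: u_def inner_commute field_simps)
  have split: "M \<bullet> N = (M \<bullet> u) * (N \<bullet> u) + M' \<bullet> N'"
    by (simp add: M'_def N'_def u inner_diff_left inner_diff_right inner_commute)
  have "(norm M')\<^sup>2 \<le> 1"
    using norm_diff_projection_sq[OF u, of M] power_le_one[OF norm_ge_zero assms(1), of 2]
      zero_le_power2[of "M \<bullet> u"]
    unfolding M'_def by linarith
  then have M': "norm M' \<le> 1"
    by (simp add: power_le_one_iff)
  have "(sqrt (1 - \<Theta>\<^sup>2))\<^sup>2 \<le> (- (N \<bullet> u))\<^sup>2"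
    using Nu s(1) by (intro power_mono) auto
  then have "(norm N')\<^sup>2 \<le> \<Theta>\<^sup>2"
    using norm_diff_projection_sq[OF u, of N] power_le_one[OF norm_ge_zero assms(2), of 2] s(2)
    by (simp add: N'_def)
  then have N': "norm N' \<le> \<Theta>"
    using assms(6) by (simp add: power2_le_iff_abs_le)
  have "(M \<bullet> u) * (N \<bullet> u) \<le> 0"
    using Mu Nu s(1) by (intro mult_nonneg_nonpos; linarith)
  moreover have "M' \<bullet> N' \<le> 1 * \<Theta>"
    using norm_cauchy_schwarz[of M' N'] mult_mono[OF M' N'] assms(6) by simp
  ultimately show ?thesis
    using split by simp
qed

lemma outer_normal_eqI:
  fixes \<Omega> :: "'a::euclidean_space set"
  assumes unit: "norm \<nu> = 1"
    and supporting: "\<And>Y. Y \<in> \<Omega> \<Longrightarrow> (Y - p) \<bullet> \<nu> \<le> 0"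
    and inward: "\<And>e. e \<bullet> \<nu> < 0 \<Longrightarrow> \<forall>\<^sub>F t in at_right 0. p + t *\<^sub>R e \<in> \<Omega>"
  shows "outer_normal \<Omega> p = \<nu>"
  unfolding outer_normal_def
proof (rule the_equality)
  show "norm \<nu> = 1 \<and> (\<forall>Y\<in>\<Omega>. (Y - p) \<bullet> \<nu> \<le> 0)"
    using unit supporting by blast
next
  fix \<mu> assume \<mu>: "norm \<mu> = 1 \<and> (\<forall>Y\<in>\<Omega>. (Y - p) \<bullet> \<mu> \<le> 0)"
  have "1 \<le> \<mu> \<bullet> \<nu>"
  proof (rule ccontr)
    assume "\<not> 1 \<le> \<mu> \<bullet> \<nu>"
    then have "(\<mu> - \<nu>) \<bullet> \<nu> < 0"
      using unit by (simp add: inner_diff_left norm_eq_1)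
    then have "\<forall>\<^sub>F t in at_right 0. 0 < t \<and> p + t *\<^sub>R (\<mu> - \<nu>) \<in> \<Omega>"
      by (intro eventually_conj eventually_at_right_less inward)
    then obtain t :: real where "0 < t" "p + t *\<^sub>R (\<mu> - \<nu>) \<in> \<Omega>"
      using eventually_happens'[OF trivial_limit_at_right_real] by blast
    then have "(p + t *\<^sub>R (\<mu> - \<nu>) - p) \<bullet> \<mu> \<le> 0"
      using \<mu> by blast
    then have "(\<mu> - \<nu>) \<bullet> \<mu> \<le> 0"
      using \<open>0 < t\<close> by (simp add: mult_le_0_iff)
    then show False
      using \<mu> \<open>\<not> 1 \<le> \<mu> \<bullet> \<nu>\<close> by (simp add: inner_diff_left inner_commute[of \<nu> \<mu>] norm_eq_1)
  qed
  then have "(norm (\<mu> - \<nu>))\<^sup>2 \<le> 0"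
    using norm_diff_unit_vectors_sq[of \<mu> \<nu>] \<mu> unit by simp
  then show "\<mu> = \<nu>"
    by simp
qed

lemma eventually_ray_in_open:
  fixes p e :: "'a::real_normed_vector"
  assumes "open U" "p \<in> U"
  shows "\<forall>\<^sub>F t in at_right 0. p + t *\<^sub>R e \<in> U"
proof -
  have "((\<lambda>t. p + t *\<^sub>R e) \<longlongrightarrow> p + 0 *\<^sub>R e) (at_right 0)"
    by (intro tendsto_intros)
  then show ?thesis
    using assms by (simp add: topological_tendstoD)
qed

lemma eventually_ray_less:
  fixes g :: "'a::real_normed_vector \<Rightarrow> real"
  assumes "(g has_derivative g') (at p)" "g' e < 0"
  shows "\<forall>\<^sub>F t in at_right 0. g (p + t *\<^sub>R e) < g p"
proof -
  have "((\<lambda>t. p + t *\<^sub>R e) has_derivative (\<lambda>t. t *\<^sub>R e)) (at 0)"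
    by (auto intro!: derivative_eq_intros)
  then have "((g \<circ> (\<lambda>t. p + t *\<^sub>R e)) has_derivative (g' \<circ> (\<lambda>t. t *\<^sub>R e))) (at 0)"
    by (rule diff_chain_at) (simp add: assms(1))
  moreover have "g' (t *\<^sub>R e) = g' e * t" for t
    using linear_scale[OF has_derivative_linear[OF assms(1)]] by simp
  ultimately have "((\<lambda>t. g (p + t *\<^sub>R e)) has_real_derivative g' e) (at 0)"
    by (simp add: has_field_derivative_def o_def)
  from DERIV_neg_dec_right[OF this assms(2)] show ?thesis
    by (auto simp: eventually_at_right_field)
qed

lemma sublevel_frontier_eq_zero:
  fixes g :: "'a::t2_space \<Rightarrow> real"
  assumes "closed \<Omega>" "p \<in> frontier \<Omega>" "open U" "p \<in> U"
    and sublevel: "\<And>x. x \<in> U \<Longrightarrow> x \<in> \<Omega> \<longleftrightarrow> g x \<le> 0" and "continuous (at p) g"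
  shows "g p = 0"
proof (rule antisym)
  have "p \<in> \<Omega>"
    using assms(1,2) frontier_subset_closed by blast
  then show "g p \<le> 0"
    using sublevel[OF \<open>p \<in> U\<close>] by simp
next
  show "0 \<le> g p"
  proof (rule ccontr)
    assume "\<not> 0 \<le> g p"
    have "(g \<longlongrightarrow> g p) (nhds p)"
      using assms(6) by (simp add: isCont_def tendsto_at_iff_tendsto_nhds)
    then have "\<forall>\<^sub>F x in nhds p. g x < 0"
      using \<open>\<not> 0 \<le> g p\<close> by (intro order_tendstoD(2)) auto
    moreover have "\<forall>\<^sub>F x in nhds p. x \<in> U"
      using assms(3,4) by (rule eventually_nhds_in_open)
    ultimately have "\<forall>\<^sub>F x in nhds p. x \<in> \<Omega>"
      by eventually_elim (simp add: sublevel)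
    then obtain S where "open S" "p \<in> S" "S \<subseteq> \<Omega>"
      unfolding eventually_nhds by blast
    then have "p \<in> interior \<Omega>"
      by (rule interiorI)
    then show False
      using assms(2) by (simp add: frontier_def)
  qed
qed

lemma sublevel_ray_inward:
  fixes g :: "'a::real_normed_vector \<Rightarrow> real"
  assumes "open U" "p \<in> U" "\<And>x. x \<in> U \<Longrightarrow> x \<in> \<Omega> \<longleftrightarrow> g x \<le> 0" "g p \<le> 0"
    and "(g has_derivative g') (at p)" "g' e < 0"
  shows "\<forall>\<^sub>F t in at_right 0. p + t *\<^sub>R e \<in> \<Omega>"
  using eventually_ray_in_open[OF assms(1,2), of e] eventually_ray_less[OF assms(5,6)]
  by eventually_elim (use assms(4) in \<open>auto simp: assms(3)\<close>)

lemma convex_sublevel_derivative_nonpos: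
  fixes g :: "'a::real_normed_vector \<Rightarrow> real"
  assumes "convex \<Omega>" "p \<in> \<Omega>" "Y \<in> \<Omega>" "open U" "p \<in> U"
    and sublevel: "\<And>x. x \<in> U \<Longrightarrow> x \<in> \<Omega> \<longleftrightarrow> g x \<le> 0" and "g p = 0"
    and "(g has_derivative g') (at p)"
  shows "g' (Y - p) \<le> 0"
proof (rule ccontr)
  assume "\<not> g' (Y - p) \<le> 0"
  then have "\<forall>\<^sub>F t in at_right 0. - g (p + t *\<^sub>R (Y - p)) < - g p"
    using has_derivative_minus[OF assms(8)] by (intro eventually_ray_less) auto
  moreover have "\<forall>\<^sub>F t in at_right 0. p + t *\<^sub>R (Y - p) \<in> U"
    using assms(4,5) by (rule eventually_ray_in_open)
  moreover have "\<forall>\<^sub>F t in at_right 0. 0 < t \<and> t < (1::real)"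
    by (auto simp: eventually_at_right_field intro: exI[of _ 1])
  ultimately have "\<forall>\<^sub>F t :: real in at_right 0. False"
  proof eventually_elim
    case (elim t)
    have "p + t *\<^sub>R (Y - p) = (1 - t) *\<^sub>R p + t *\<^sub>R Y"
      by (simp add: algebra_simps)
    also have "\<dots> \<in> \<Omega>"
      using assms(1-3) elim(3) by (simp add: convex_alt)
    finally have "g (p + t *\<^sub>R (Y - p)) \<le> 0"
      using sublevel[OF elim(2)] by simp
    then show False
      using elim(1) \<open>g p = 0\<close> by simp
  qed
  then show False
    by simp
qed

lemma outer_normal_C1_boundary:
  fixes \<Omega> :: "'a::euclidean_space set"
  assumes "closed \<Omega>" "convex \<Omega>" "C1_boundary \<Omega>" "p \<in> frontier \<Omega>"
  shows "norm (outer_normal \<Omega> p) = 1"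
    and "Y \<in> \<Omega> \<Longrightarrow> (Y - p) \<bullet> outer_normal \<Omega> p \<le> 0"
    and "e \<bullet> outer_normal \<Omega> p < 0 \<Longrightarrow> \<forall>\<^sub>F t in at_right 0. p + t *\<^sub>R e \<in> \<Omega>"
proof -
  obtain U g G where U: "open U" "p \<in> U"
    and deriv_on: "\<forall>x\<in>U. (g has_derivative (\<lambda>h. G x \<bullet> h)) (at x)" and "G p \<noteq> 0"
    and sublevel_set: "\<Omega> \<inter> U = {x\<in>U. g x \<le> 0}"
    using bspec[OF assms(3)[unfolded C1_boundary_def] assms(4)] by (elim exE conjE) auto
  have deriv: "(g has_derivative (\<lambda>h. G p \<bullet> h)) (at p)"
    using deriv_on U(2) by blast
  have sublevel: "x \<in> \<Omega> \<longleftrightarrow> g x \<le> 0" if "x \<in> U" for x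
    using that sublevel_set by (auto simp: set_eq_iff)
  have "p \<in> \<Omega>"
    using assms(1,4) frontier_subset_closed by blast
  have "g p = 0"
    using assms(1,4) U sublevel has_derivative_continuous[OF deriv]
    by (rule sublevel_frontier_eq_zero)
  define \<nu> where "\<nu> = G p /\<^sub>R norm (G p)"
  have unit: "norm \<nu> = 1"
    using \<open>G p \<noteq> 0\<close> by (simp add: \<nu>_def)
  have inner_\<nu>: "x \<bullet> \<nu> = (G p \<bullet> x) / norm (G p)" for x
    by (simp add: \<nu>_def inner_commute divide_inverse mult.commute)
  have supporting: "(Y - p) \<bullet> \<nu> \<le> 0" if "Y \<in> \<Omega>" for Y
    using convex_sublevel_derivative_nonpos[OF assms(2) \<open>p \<in> \<Omega>\<close> that U sublevel \<open>g p = 0\<close> deriv]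
    by (simp add: inner_\<nu> divide_nonpos_nonneg)
  have inward: "\<forall>\<^sub>F t in at_right 0. p + t *\<^sub>R e \<in> \<Omega>" if "e \<bullet> \<nu> < 0" for e
    using U sublevel \<open>g p = 0\<close> deriv that \<open>G p \<noteq> 0\<close>
    by (intro sublevel_ray_inward) (auto simp: inner_\<nu> divide_less_0_iff)
  have "outer_normal \<Omega> p = \<nu>"
    using unit supporting inward by (rule outer_normal_eqI)
  then show "norm (outer_normal \<Omega> p) = 1"
    and "Y \<in> \<Omega> \<Longrightarrow> (Y - p) \<bullet> outer_normal \<Omega> p \<le> 0"
    and "e \<bullet> outer_normal \<Omega> p < 0 \<Longrightarrow> \<forall>\<^sub>F t in at_right 0. p + t *\<^sub>R e \<in> \<Omega>"
    using unit supporting inward by simp_all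
qed

lemma outer_normal_diff_le_normal_modulus:
  fixes \<Omega> :: "'a::euclidean_space set"
  assumes "closed \<Omega>" "convex \<Omega>" "C1_boundary \<Omega>"
    and "X1 \<in> frontier \<Omega>" "X2 \<in> frontier \<Omega>" "dist X1 X2 < r"
  shows "norm (outer_normal \<Omega> X1 - outer_normal \<Omega> X2) \<le> normal_modulus \<Omega> r"
proof -
  let ?S = "{norm (outer_normal \<Omega> X1 - outer_normal \<Omega> X2) | X1 X2.
    X1 \<in> frontier \<Omega> \<and> X2 \<in> frontier \<Omega> \<and> dist X1 X2 < r}"
  have "norm (outer_normal \<Omega> X1 - outer_normal \<Omega> X2) \<in> ?S"
    using assms(4-6) by blast
  moreover have "bdd_above ?S"
  proof (rule bdd_aboveI[where M = 2])
    fix x assume "x \<in> ?S"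
    then obtain Y1 Y2 where "x = norm (outer_normal \<Omega> Y1 - outer_normal \<Omega> Y2)"
      and "Y1 \<in> frontier \<Omega>" "Y2 \<in> frontier \<Omega>"
      by blast
    then show "x \<le> 2"
      using norm_triangle_ineq4[of "outer_normal \<Omega> Y1" "outer_normal \<Omega> Y2"]
        outer_normal_C1_boundary(1)[OF assms(1-3)] by simp
  qed
  ultimately show ?thesis
    unfolding normal_modulus_def by (rule cSup_upper)
qed

lemma ball_Int_frontier_subset_boundary_plus:
  fixes \<Omega> :: "'a::euclidean_space set"
  assumes "closed \<Omega>" "convex \<Omega>" "C1_boundary \<Omega>"
    and "normal_modulus \<Omega> r < sqrt (2 - 2 * \<Theta>)" "X0 \<in> frontier \<Omega>"
  shows "ball X0 r \<inter> frontier \<Omega> \<subseteq> boundary_plus \<Omega> \<Theta> X0"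
proof
  let ?N = "outer_normal \<Omega>"
  fix X assume "X \<in> ball X0 r \<inter> frontier \<Omega>"
  then have X: "X \<in> frontier \<Omega>" "dist X X0 < r"
    by (auto simp: dist_commute)
  have "norm (?N X - ?N X0) \<le> normal_modulus \<Omega> r"
    using assms(1-3) X(1) assms(5) X(2) by (rule outer_normal_diff_le_normal_modulus)
  then have less: "norm (?N X - ?N X0) < sqrt (2 - 2 * \<Theta>)"
    using assms(4) by linarith
  then have "0 < sqrt (2 - 2 * \<Theta>)"
    by (rule le_less_trans[OF norm_ge_zero])
  have "(norm (?N X - ?N X0))\<^sup>2 < (sqrt (2 - 2 * \<Theta>))\<^sup>2"
    by (rule power_strict_mono[OF less norm_ge_zero]) simp
  also have "\<dots> = 2 - 2 * \<Theta>"
    using \<open>0 < sqrt (2 - 2 * \<Theta>)\<close> by simp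
  also have "(norm (?N X - ?N X0))\<^sup>2 = 2 - 2 * (?N X \<bullet> ?N X0)"
    using outer_normal_C1_boundary(1)[OF assms(1-3)] X(1) assms(5)
    by (intro norm_diff_unit_vectors_sq)
  finally have "\<Theta> < ?N X \<bullet> ?N X0"
    by simp
  then show "X \<in> boundary_plus \<Omega> \<Theta> X0"
    using X(1) by (simp add: boundary_plus_def)
qed

lemma ray_meets_frontier:
  fixes a e :: "'a::real_normed_vector"
  assumes "a + s *\<^sub>R e \<in> S" "a + e \<notin> S" "s \<le> 1"
  obtains t where "s \<le> t" "t \<le> 1" "a + t *\<^sub>R e \<in> frontier S"
proof -
  have "connected ((\<lambda>t. a + t *\<^sub>R e) ` {s..1})"
    by (intro connected_continuous_image continuous_intros) auto
  moreover have "a + s *\<^sub>R e \<in> (\<lambda>t. a + t *\<^sub>R e) ` {s..1}"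
    and "a + e \<in> (\<lambda>t. a + t *\<^sub>R e) ` {s..1}"
    using assms(3) by (auto simp: image_iff intro: bexI[of _ 1])
  ultimately have "(\<lambda>t. a + t *\<^sub>R e) ` {s..1} \<inter> frontier S \<noteq> {}"
    using assms(1,2) by (intro connected_Int_frontier) blast+
  then show ?thesis
    using that by auto
qed

lemma inward_cone_Int_ball_subset:
  fixes \<Omega> :: "'a::euclidean_space set"
  assumes "closed \<Omega>" "convex \<Omega>" "C1_boundary \<Omega>" "X0 \<in> frontier \<Omega>" "0 \<le> \<Theta>" "\<Theta> < 1"
    and plus: "ball X0 r \<inter> frontier \<Omega> \<subseteq> boundary_plus \<Omega> \<Theta> X0"
  shows "{X. (X - X0) \<bullet> (- outer_normal \<Omega> X0) \<ge> sqrt (1 - \<Theta>\<^sup>2) * norm (X - X0)}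
      \<inter> ball X0 r \<subseteq> \<Omega>"
proof
  let ?N = "outer_normal \<Omega>"
  note normal = outer_normal_C1_boundary[OF assms(1-3)]
  fix X assume "X \<in> {X. (X - X0) \<bullet> (- ?N X0) \<ge> sqrt (1 - \<Theta>\<^sup>2) * norm (X - X0)} \<inter> ball X0 r"
  then have cone: "(X - X0) \<bullet> ?N X0 \<le> - sqrt (1 - \<Theta>\<^sup>2) * norm (X - X0)"
    and "norm (X - X0) < r"
    by (auto simp: dist_norm norm_minus_commute)
  show "X \<in> \<Omega>"
  proof (rule ccontr)
    assume "X \<notin> \<Omega>"
    define e where "e = X - X0"
    have "X0 \<in> \<Omega>"
      using assms(1,4) frontier_subset_closed by blast
    then have "e \<noteq> 0"
      using \<open>X \<notin> \<Omega>\<close> by (auto simp: e_def)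
    moreover have "0 < sqrt (1 - \<Theta>\<^sup>2)"
      using assms(5,6) by (simp add: abs_square_less_1)
    ultimately have "0 < sqrt (1 - \<Theta>\<^sup>2) * norm e"
      by simp
    then have "e \<bullet> ?N X0 < 0"
      using cone by (simp add: e_def)
    then have "\<forall>\<^sub>F t in at_right 0. (0 < t \<and> t < 1) \<and> X0 + t *\<^sub>R e \<in> \<Omega>"
      using normal(3)[OF assms(4)]
      by (intro eventually_conj) (auto simp: eventually_at_right_field intro: exI[of _ 1])
    then obtain t0 :: real where t0: "0 < t0" "t0 < 1" "X0 + t0 *\<^sub>R e \<in> \<Omega>"
      using eventually_happens'[OF trivial_limit_at_right_real] by blast
    obtain t where t: "t0 \<le> t" "t \<le> 1" and "X0 + t *\<^sub>R e \<in> frontier \<Omega>"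
      using ray_meets_frontier[of X0 t0 e \<Omega>] t0 \<open>X \<notin> \<Omega>\<close> by (auto simp: e_def)
    define Y where "Y = X0 + t *\<^sub>R e"
    have Y: "Y \<in> frontier \<Omega>"
      using \<open>X0 + t *\<^sub>R e \<in> frontier \<Omega>\<close> by (simp add: Y_def)
    have "norm (t *\<^sub>R e) \<le> norm e"
      using t t0 by (simp add: mult_left_le_one_le)
    then have "dist X0 Y < r"
      using \<open>norm (X - X0) < r\<close> by (simp add: Y_def dist_norm e_def)
    then have "\<Theta> < ?N Y \<bullet> ?N X0"
      using plus Y by (auto simp: boundary_plus_def)
    moreover have "?N Y \<bullet> ?N X0 \<le> \<Theta>"
    proof (rule inner_le_if_opposite_cone)
      have "(X0 - Y) \<bullet> ?N Y \<le> 0"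
        using normal(2)[OF Y \<open>X0 \<in> \<Omega>\<close>] .
      then show "0 \<le> e \<bullet> ?N Y"
        using t t0 by (simp add: Y_def zero_le_mult_iff)
      show "e \<bullet> ?N X0 \<le> - sqrt (1 - \<Theta>\<^sup>2) * norm e"
        using cone by (simp add: e_def)
    qed (use normal(1) Y assms(4-6) \<open>e \<noteq> 0\<close> in auto)
    ultimately show False
      by simp
  qed
qed

theorem lemma2p8:
  fixes \<Omega> :: "'a::euclidean_space set" and \<Theta> r :: real and X0 :: 'a
  assumes "convex_body \<Omega>" and "C1_boundary \<Omega>"
    and "0 \<le> \<Theta>" and "\<Theta> < 1" and "r > 0"
    and "normal_modulus \<Omega> r < sqrt (2 - 2 * \<Theta>)"
    and "X0 \<in> frontier \<Omega>"
  shows "ball X0 r \<inter> frontier \<Omega> \<subseteq> boundary_plus \<Omega> \<Theta> X0 \<and>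
         {X. (X - X0) \<bullet> (- outer_normal \<Omega> X0) \<ge> sqrt (1 - \<Theta>\<^sup>2) * norm (X - X0)}
            \<inter> ball X0 r \<subseteq> \<Omega>"
proof -
  have "closed \<Omega>" "convex \<Omega>"
    using assms(1) by (simp_all add: convex_body_def compact_imp_closed)
  moreover have "ball X0 r \<inter> frontier \<Omega> \<subseteq> boundary_plus \<Omega> \<Theta> X0"
    using calculation assms(2,6,7) by (rule ball_Int_frontier_subset_boundary_plus)
  ultimately show ?thesis
    using inward_cone_Int_ball_subset assms(2-4,7) by blast
qed

end
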